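(* Fix a point $X\in\mathbb{P}^3$ and a line $L\subseteq\mathbb{P}^3$ and let $\mathcal{C}$ be a generic arrangement of $m\ge 2$ cameras. (1) The multidegree of $\mathcal{M}_\mathcal{C}^L\subseteq(\mathbb{P}^2)^m$ is given by the single value $D(1,0,\ldots,0)=1$ (and its permutations). (2) The multidegree of $\mathcal{L}_\mathcal{C}^X\subseteq(\mathbb{P}^2)^m$ is given by the values $D(2,0,\ldots,0)=0$ and $D(1,1,0,\ldots,0)=1$ (and their permutations).
   Context: All spaces are complex projective. A camera is a full-rank $3\times4$ complex matrix $C:\mathbb{P}^3\dashrightarrow\mathbb{P}^2$ with center its kernel; a camera arrangement $\mathcal{C}=(C_1,\ldots,C_m)$ has pairwise distinct centers. For a line $L'$ spanned by $u,v$, $C\cdot L':=Cu\times Cv\in\mathbb{P}^2$. $\mathcal{M}_\mathcal{C}^L$ is the Zariski closure of the image of $L\ni Y\mapsto(C_1Y,\ldots,C_mY)$; $\mathcal{L}_\mathcal{C}^X$ is the Zariski closure of the image of $\Lambda(X)\ni L'\mapsto(C_1\cdot L',\ldots,C_m\cdot L')$, $\Lambda(X)$ being the lines through $X$. For a variety $\mathcal{X}\subseteq\mathbb{P}^{h_1}\times\cdots\times\mathbb{P}^{h_m}$, its multidegree is the function $D(d_1,\ldots,d_m)=\#\big(\mathcal{X}\cap(L^{(1)}_{d_1}\times\cdots\times L^{(m)}_{d_m})\big)$ for $d_1+\cdots+d_m=\dim\mathcal{X}$, where $L^{(i)}_{d}\subseteq\mathbb{P}^{h_i}$ is a general linear subspace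 of codimension $d$. "Generic" means outside a proper Zariski closed subset. *)

theory Defs
  imports "HOL-Analysis.Analysis"
begin

inductive_set polys :: "('a \<Rightarrow> complex) set \<Rightarrow> ('a \<Rightarrow> complex) set"
  for V :: "('a \<Rightarrow> complex) set" where
  const: "(\<lambda>_. c) \<in> polys V"
| var: "v \<in> V \<Longrightarrow> v \<in> polys V"
| add: "f \<in> polys V \<Longrightarrow> g \<in> polys V \<Longrightarrow> (\<lambda>x. f x + g x) \<in> polys V"
| mult: "f \<in> polys V \<Longrightarrow> g \<in> polys V \<Longrightarrow> (\<lambda>x. f x * g x) \<in> polys V"

type_synonym camera = "complex^4^3"

(* complex projective points are represented by nonzero vectors *)
definition pt :: "complex^'n \<Rightarrow> (complex^'n) set" where
  "pt v = range (\<lambda>c. c *s v)"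

definition cindep :: "complex^'n \<Rightarrow> complex^'n \<Rightarrow> bool" where
  "cindep u v \<longleftrightarrow> (\<forall>a b. a *s u + b *s v = 0 \<longrightarrow> a = 0 \<and> b = 0)"

definition ccross :: "complex^3 \<Rightarrow> complex^3 \<Rightarrow> complex^3" where
  "ccross a b = vector [a$2 * b$3 - a$3 * b$2, a$3 * b$1 - a$1 * b$3, a$1 * b$2 - a$2 * b$1]"

(* full rank 3x4 matrix = surjective linear map C^4 -> C^3 *)
definition is_camera :: "camera \<Rightarrow> bool" where
  "is_camera C \<longleftrightarrow> (\<forall>y. \<exists>Y. C *v Y = y)"

definition center :: "camera \<Rightarrow> (complex^4) set" where
  "center C = {Y. C *v Y = 0}"

definition camera_arrangement :: "nat \<Rightarrow> (nat \<Rightarrow> camera) \<Rightarrow> bool" where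
  "camera_arrangement m Cs \<longleftrightarrow> (\<forall>i<m. is_camera (Cs i)) \<and>
     (\<forall>i<m. \<forall>j<m. i \<noteq> j \<longrightarrow> center (Cs i) \<noteq> center (Cs j))"

definition cam_coords :: "nat \<Rightarrow> ((nat \<Rightarrow> camera) \<Rightarrow> complex) set" where
  "cam_coords m = {(\<lambda>Cs. Cs i $ r $ c) | i r c. i < m}"

definition pt_coords :: "nat \<Rightarrow> ((nat \<Rightarrow> complex^3) \<Rightarrow> complex) set" where
  "pt_coords m = {(\<lambda>x. x i $ j) | i j. i < m}"

definition multihom :: "nat \<Rightarrow> (nat \<Rightarrow> nat) \<Rightarrow> ((nat \<Rightarrow> complex^3) \<Rightarrow> complex) \<Rightarrow> bool" where
  "multihom m e f \<longleftrightarrow> f \<in> polys (pt_coords m) \<and>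
     (\<forall>x l. (\<forall>i<m. l i \<noteq> 0) \<longrightarrow> f (\<lambda>i. l i *s x i) = (\<Prod>i<m. l i ^ e i) * f x)"

(* points of (P^2)^m: tuples of nonzero representatives, padded with 0 beyond m *)
definition pts_m :: "nat \<Rightarrow> (nat \<Rightarrow> complex^3) set" where
  "pts_m m = {x. (\<forall>i<m. x i \<noteq> 0) \<and> (\<forall>i\<ge>m. x i = 0)}"

definition zclosure :: "nat \<Rightarrow> (nat \<Rightarrow> complex^3) set \<Rightarrow> (nat \<Rightarrow> complex^3) set" where
  "zclosure m S = {x \<in> pts_m m. \<forall>f e. multihom m e f \<and> (\<forall>y\<in>S. f y = 0) \<longrightarrow> f x = 0}"

definition multiview_line :: "nat \<Rightarrow> (nat \<Rightarrow> camera) \<Rightarrow> complex^4 \<Rightarrow> complex^4 \<Rightarrow> (nat \<Rightarrow> complex^3) set" where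
  "multiview_line m Cs u v = zclosure m
     {x. \<exists>a b. a *s u + b *s v \<noteq> 0 \<and> (\<forall>i<m. Cs i *v (a *s u + b *s v) \<noteq> 0) \<and>
          x = (\<lambda>i. if i < m then Cs i *v (a *s u + b *s v) else 0)}"

definition cam_line :: "camera \<Rightarrow> complex^4 \<Rightarrow> complex^4 \<Rightarrow> complex^3" where
  "cam_line C u v = ccross (C *v u) (C *v v)"

(* L_C^X: lines through X are spanned by X and some w independent of X *)
definition LX_X :: "nat \<Rightarrow> (nat \<Rightarrow> camera) \<Rightarrow> complex^4 \<Rightarrow> (nat \<Rightarrow> complex^3) set" where
  "LX_X m Cs X = zclosure m
     {x. \<exists>w. cindep X w \<and> (\<forall>i<m. cam_line (Cs i) X w \<noteq> 0) \<and>
          x = (\<lambda>i. if i < m then cam_line (Cs i) X w else 0)}"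

(* a linear subspace of codim d i in the i-th P^2 is cut out by d i linear forms A i r, r < d i *)
definition lin_coords :: "nat \<Rightarrow> (nat \<Rightarrow> nat) \<Rightarrow> ((nat \<Rightarrow> nat \<Rightarrow> complex^3) \<Rightarrow> complex) set" where
  "lin_coords m d = {(\<lambda>A. A i r $ j) | i r j. i < m \<and> r < d i}"

definition section_pts :: "nat \<Rightarrow> (nat \<Rightarrow> nat) \<Rightarrow> (nat \<Rightarrow> nat \<Rightarrow> complex^3)
     \<Rightarrow> (nat \<Rightarrow> complex^3) set \<Rightarrow> (nat \<Rightarrow> (complex^3) set) set" where
  "section_pts m d A V = (\<lambda>x. \<lambda>i. pt (x i)) `
     {x \<in> V. \<forall>i<m. \<forall>r<d i. (\<Sum>j\<in>UNIV. A i r $ j * x i $ j) = 0}"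

(* multidegree value: D(d) = n, i.e. for a general choice of linear subspaces
   (outside a proper Zariski closed set, i.e. where some nonzero polynomial does not vanish)
   the intersection consists of exactly n points of (P^2)^m *)
definition multideg_is :: "nat \<Rightarrow> (nat \<Rightarrow> complex^3) set \<Rightarrow> (nat \<Rightarrow> nat) \<Rightarrow> nat \<Rightarrow> bool" where
  "multideg_is m V d n \<longleftrightarrow> (\<exists>q \<in> polys (lin_coords m d). (\<exists>A. q A \<noteq> 0) \<and>
     (\<forall>A. q A \<noteq> 0 \<longrightarrow> finite (section_pts m d A V) \<and> card (section_pts m d A V) = n))"

end

theory Submission
  imports Defs "HOL-Computational_Algebra.Polynomial"
begin

(* Genericity is witnessed by a polynomial in the camera entries that is not identically zero;
   finitely many such conditions can be imposed at once, and each one is checked on explicit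
   coordinate cameras.

   For M_C^L, a point of the closure satisfies x_i . (C_i u x C_i v) = 0 and the bilinear relations
   saying that every x_k is C_k applied to the point of L over x_i. A general line in the i-th
   plane therefore meets the image line C_i L in one point, which determines the point of L and
   so the whole tuple: D(1,0,...,0) = 1.

   For L_C^X, every x_i passes through C_i X, so two general linear conditions on x_i force
   x_i = 0 and D(2,0,...,0) = 0. One condition on x_i and one on x_j fix two lines through C_i X
   and C_j X; their back-projected planes meet in a single line through X, and the trilinear
   relations det(x_i C_i, x_j C_j, x_k C_k, g) = 0 (with g . X <> 0) force x_k to be its image:
   D(1,1,0,...,0) = 1. For generic cameras and conditions this line is proper and avoids all
   centers; this is what the non-vanishing of backproj_meet expresses. *)

section \<open>Polynomial functions and genericity\<close>

lemma polys_uminus: "f \<in> polys V \<Longrightarrow> (\<lambda>x. - f x) \<in> polys V"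
  using polys.mult[OF polys.const[of "-1"], of f] by simp

lemma polys_minus: "f \<in> polys V \<Longrightarrow> g \<in> polys V \<Longrightarrow> (\<lambda>x. f x - g x) \<in> polys V"
  using polys.add[OF _ polys_uminus, of f V g] by simp

lemma polys_sum: "finite K \<Longrightarrow> (\<And>k. k \<in> K \<Longrightarrow> F k \<in> polys V) \<Longrightarrow> (\<lambda>x. \<Sum>k\<in>K. F k x) \<in> polys V"
  by (induction K rule: finite_induct) (auto intro: polys.const polys.add)

(* Along such a line every polynomial function becomes a univariate polynomial, so a product
   of polynomial functions that are not identically zero is not identically zero. *)
definition affine_line_connected :: "('a \<Rightarrow> complex) set \<Rightarrow> bool" where
  "affine_line_connected V \<longleftrightarrow>
     (\<forall>a b. \<exists>l. l 0 = a \<and> l 1 = b \<and> (\<forall>v\<in>V. \<exists>c0 c1. \<forall>t. v (l t) = c0 + c1 * t))"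

lemma polys_along_affine_line:
  assumes "f \<in> polys V" and "\<forall>v\<in>V. \<exists>c0 c1. \<forall>t. v (l t) = c0 + c1 * t"
  shows "\<exists>P. \<forall>t. f (l t) = poly P t"
  using assms(1)
proof (induction rule: polys.induct)
  case (const c)
  show ?case by (rule exI[of _ "[:c:]"]) simp
next
  case (var v)
  then obtain c0 c1 where "\<forall>t. v (l t) = c0 + c1 * t" using assms(2) by blast
  then show ?case by (intro exI[of _ "[:c0, c1:]"]) (simp add: mult.commute)
next
  case (add f g)
  then obtain P Q where "\<forall>t. f (l t) = poly P t" "\<forall>t. g (l t) = poly Q t" by blast
  then show ?case by (intro exI[of _ "P + Q"]) simp
next
  case (mult f g)
  then obtain P Q where "\<forall>t. f (l t) = poly P t" "\<forall>t. g (l t) = poly Q t" by blast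
  then show ?case by (intro exI[of _ "P * Q"]) simp
qed

lemma polys_mult_nonzero:
  assumes "affine_line_connected V" "f \<in> polys V" "g \<in> polys V" "f a \<noteq> 0" "g b \<noteq> 0"
  shows "\<exists>x. f x * g x \<noteq> 0"
proof -
  obtain l where l: "l 0 = a" "l 1 = b" "\<forall>v\<in>V. \<exists>c0 c1. \<forall>t. v (l t) = c0 + c1 * t"
    using assms(1) unfolding affine_line_connected_def by blast
  obtain P where P: "\<forall>t. f (l t) = poly P t"
    using polys_along_affine_line[OF assms(2) l(3)] by blast
  obtain Q where Q: "\<forall>t. g (l t) = poly Q t"
    using polys_along_affine_line[OF assms(3) l(3)] by blast
  have "P * Q \<noteq> 0" using P Q l assms(4,5) by (metis mult_eq_0_iff poly_0)
  then obtain t where "poly (P * Q) t \<noteq> 0"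
    using poly_all_0_iff_0 by blast
  then show ?thesis using P Q by (intro exI[of _ "l t"]) simp
qed

(* P holds outside the zero set of a polynomial function that is not identically zero:
   the shape of both multideg_is and the theorem. *)
definition generically :: "('a \<Rightarrow> complex) set \<Rightarrow> ('a \<Rightarrow> bool) \<Rightarrow> bool" where
  "generically V P \<longleftrightarrow> (\<exists>p \<in> polys V. (\<exists>x. p x \<noteq> 0) \<and> (\<forall>x. p x \<noteq> 0 \<longrightarrow> P x))"

lemma generically_True: "generically V (\<lambda>_. True)"
  unfolding generically_def by (intro bexI[OF _ polys.const[of 1]]) simp

lemma generically_mono: "generically V P \<Longrightarrow> (\<And>x. P x \<Longrightarrow> Q x) \<Longrightarrow> generically V Q"
  unfolding generically_def by blast

lemma generically_ex: "generically V P \<Longrightarrow> \<exists>x. P x"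
  unfolding generically_def by blast

lemma generically_nonzero: "f \<in> polys V \<Longrightarrow> f a \<noteq> 0 \<Longrightarrow> generically V (\<lambda>x. f x \<noteq> 0)"
  unfolding generically_def by blast

lemma generically_conj:
  assumes "affine_line_connected V" "generically V P" "generically V Q"
  shows "generically V (\<lambda>x. P x \<and> Q x)"
proof -
  obtain p a where p: "p \<in> polys V" "p a \<noteq> 0" "\<And>x. p x \<noteq> 0 \<Longrightarrow> P x"
    using assms(2) unfolding generically_def by blast
  obtain q b where q: "q \<in> polys V" "q b \<noteq> 0" "\<And>x. q x \<noteq> 0 \<Longrightarrow> Q x"
    using assms(3) unfolding generically_def by blast
  show ?thesis
    unfolding generically_def
    using polys.mult[OF p(1) q(1)] polys_mult_nonzero[OF assms(1) p(1) q(1) p(2) q(2)] p(3) q(3)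
    by (intro bexI[of _ "\<lambda>x. p x * q x"]) auto
qed

lemma generically_finite_Ball:
  assumes "affine_line_connected V" "finite K" "\<And>k. k \<in> K \<Longrightarrow> generically V (P k)"
  shows "generically V (\<lambda>x. \<forall>k\<in>K. P k x)"
  using assms(2,3)
proof (induction K rule: finite_induct)
  case empty
  show ?case using generically_True by simp
next
  case (insert k K)
  then show ?case using generically_conj[OF assms(1), of "P k" "\<lambda>x. \<forall>k\<in>K. P k x"] by simp
qed

lemma generically_all_less:
  fixes n :: nat
  assumes "affine_line_connected V" "\<And>k. k < n \<Longrightarrow> generically V (P k)"
  shows "generically V (\<lambda>x. \<forall>k<n. P k x)"
proof -
  have "generically V (\<lambda>x. \<forall>k\<in>{..<n}. P k x)"
    using assms by (intro generically_finite_Ball) auto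
  then show ?thesis by (rule generically_mono) simp
qed

lemma generically_imp: "(P \<Longrightarrow> generically V Q) \<Longrightarrow> generically V (\<lambda>x. P \<longrightarrow> Q x)"
  by (cases P) (simp_all add: generically_True)

lemma generically_poly_witness:
  assumes "generically V P" "\<And>x. P x \<Longrightarrow> A x \<Longrightarrow> Q x"
  shows "\<exists>p \<in> polys V. (\<exists>x. p x \<noteq> 0) \<and> (\<forall>x. A x \<and> p x \<noteq> 0 \<longrightarrow> Q x)"
  using assms unfolding generically_def by blast

section \<open>Bilinear algebra in dimensions three and four\<close>

definition dot :: "complex^'n \<Rightarrow> complex^'n \<Rightarrow> complex" where
  "dot a b = (\<Sum>j\<in>UNIV. a$j * b$j)"

lemma dot3: "dot (a::complex^3) b = a$1*b$1 + a$2*b$2 + a$3*b$3"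
  by (simp add: dot_def sum_3)

lemma dot4: "dot (a::complex^4) b = a$1*b$1 + a$2*b$2 + a$3*b$3 + a$4*b$4"
  by (simp add: dot_def sum_4)

lemma dot_commute: "dot a b = dot b a"
  by (simp add: dot_def mult.commute)

lemma dot_scale [simp]: "dot (s *s a) b = s * dot a b" "dot a (s *s b) = s * dot a b"
  by (simp_all add: dot_def sum_distrib_left algebra_simps)

lemma dot_add [simp]: "dot (a + b) c = dot a c + dot b c" "dot c (a + b) = dot c a + dot c b"
  by (simp_all add: dot_def sum.distrib algebra_simps)

lemma dot_diff [simp]: "dot (a - b) c = dot a c - dot b c" "dot c (a - b) = dot c a - dot c b"
  by (simp_all add: dot_def sum_subtractf algebra_simps)

lemma dot_vector_matrix: "dot (t v* C) Y = dot t (C *v Y)"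
proof -
  have "dot (t v* C) Y = (\<Sum>s\<in>UNIV. \<Sum>r\<in>UNIV. t$r * (C$r$s * Y$s))"
    by (simp add: dot_def vector_matrix_mult_def sum_distrib_right mult.assoc)
  also have "\<dots> = (\<Sum>r\<in>UNIV. \<Sum>s\<in>UNIV. t$r * (C$r$s * Y$s))" by (rule sum.swap)
  also have "\<dots> = dot t (C *v Y)" by (simp add: dot_def matrix_vector_mult_def sum_distrib_left)
  finally show ?thesis .
qed

definition cnj_vec :: "complex^'n \<Rightarrow> complex^'n" where
  "cnj_vec w = (\<chi> r. cnj (w $ r))"

lemma dot_cnj_vec_self_nonzero:
  assumes "w \<noteq> 0" shows "dot (cnj_vec w) w \<noteq> 0"
proof
  assume "dot (cnj_vec w) w = 0"
  moreover have "dot (cnj_vec w) w = complex_of_real (\<Sum>j\<in>UNIV. (cmod (w$j))^2)"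
    unfolding dot_def cnj_vec_def of_real_sum complex_norm_square by (simp add: mult.commute)
  ultimately have "(\<Sum>j\<in>UNIV. (cmod (w$j))^2) = 0"
    by (metis of_real_eq_0_iff)
  with assms show False by (simp add: sum_nonneg_eq_0_iff vec_eq_iff)
qed

lemma ccross_nth [simp]:
  "ccross a b $ 1 = a$2 * b$3 - a$3 * b$2"
  "ccross a b $ 2 = a$3 * b$1 - a$1 * b$3"
  "ccross a b $ 3 = a$1 * b$2 - a$2 * b$1"
  by (simp_all add: ccross_def)

lemma dot_ccross_self [simp]:
  "dot a (ccross a b) = 0" "dot b (ccross a b) = 0" "dot (ccross a b) a = 0" "dot (ccross a b) b = 0"
  by (simp_all add: dot3 algebra_simps)

lemma dot_ccross_assoc: "dot a (ccross b c) = dot (ccross a b) c"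
  by (simp add: dot3 algebra_simps)

lemma ccross_scale [simp]: "ccross (s *s a) b = s *s ccross a b"
  "ccross a (s *s b) = s *s ccross a b"
  unfolding vec_eq_iff forall_3 by (simp_all add: algebra_simps)

lemma ccross_add: "ccross (a + b) c = ccross a c + ccross b c"
  "ccross c (a + b) = ccross c a + ccross c b"
  unfolding vec_eq_iff forall_3 by (simp_all add: algebra_simps)

lemma ccross_diff: "ccross (a - b) c = ccross a c - ccross b c"
  "ccross c (a - b) = ccross c a - ccross c b"
  unfolding vec_eq_iff forall_3 by (simp_all add: algebra_simps)

lemma ccross_self [simp]: "ccross a a = 0"
  unfolding vec_eq_iff forall_3 by (simp add: algebra_simps)

lemma ccross_zero [simp]: "ccross 0 a = 0" "ccross a 0 = 0"
  unfolding vec_eq_iff forall_3 by simp_all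

lemma ccross_commute: "ccross b a = - ccross a b"
  unfolding vec_eq_iff forall_3 by (simp add: algebra_simps)

lemma ccross_ccross_right: "ccross a (ccross b c) = dot a c *s b - dot a b *s c"
  unfolding vec_eq_iff forall_3 by (simp add: dot3 algebra_simps)

lemma ccross_ccross_left: "ccross (ccross a b) c = dot a c *s b - dot b c *s a"
  unfolding vec_eq_iff forall_3 by (simp add: dot3 algebra_simps)

lemma ccross_eq_0_parallel:
  assumes "ccross x (y::complex^3) = 0" "y \<noteq> 0"
  shows "\<exists>s. x = s *s y"
proof -
  have "dot (cnj_vec y) y *s x = dot (cnj_vec y) x *s y"
    using ccross_ccross_right[of "cnj_vec y" x y] assms(1) by simp
  then have "x = (dot (cnj_vec y) x / dot (cnj_vec y) y) *s y"
    using dot_cnj_vec_self_nonzero[OF assms(2)] by (simp add: vec_eq_iff field_simps)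
  then show ?thesis ..
qed

lemma orthogonal_parallel_ccross:
  assumes "dot x p = 0" "dot x q = 0" "ccross p q \<noteq> 0"
  shows "\<exists>s. x = s *s ccross p q"
  using ccross_eq_0_parallel[OF _ assms(3)] assms(1,2) by (simp add: ccross_ccross_right)

lemma orthogonal_triple_eq_0:
  assumes "dot a x = 0" "dot b x = 0" "dot c x = 0" "dot c (ccross a b) \<noteq> 0"
  shows "(x::complex^3) = 0"
proof -
  have "dot c (ccross a b) *s x = dot a x *s ccross b c + dot b x *s ccross c a + dot c x *s ccross a b"
    unfolding vec_eq_iff forall_3 by (simp add: dot3 algebra_simps)
  with assms show ?thesis by simp
qed

lemma ex_ccross_nonzero:
  assumes "(v::complex^3) \<noteq> 0" shows "\<exists>a. ccross a v \<noteq> 0"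
proof (rule ccontr)
  assume "\<not> ?thesis"
  then have "ccross (axis 1 1) v = 0" "ccross (axis 2 1) v = 0" by auto
  with assms show False unfolding vec_eq_iff forall_3 by (simp add: axis_def)
qed

lemma ccross_ccross_cnj_vec:
  "dot l p = 0 \<Longrightarrow> ccross (ccross (cnj_vec p) l) p = dot (cnj_vec p) p *s l"
  by (simp add: ccross_ccross_left)

definition det3 :: "complex \<Rightarrow> complex \<Rightarrow> complex \<Rightarrow>
    complex \<Rightarrow> complex \<Rightarrow> complex \<Rightarrow> complex \<Rightarrow> complex \<Rightarrow> complex \<Rightarrow> complex" where
  "det3 a1 a2 a3 b1 b2 b3 c1 c2 c3 = a1*(b2*c3 - b3*c2) - a2*(b1*c3 - b3*c1) + a3*(b1*c2 - b2*c1)"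

definition v4 :: "complex \<Rightarrow> complex \<Rightarrow> complex \<Rightarrow> complex \<Rightarrow> complex^4" where
  "v4 a b c d = (\<chi> r. if r = 1 then a else if r = 2 then b else if r = 3 then c else d)"

lemma v4_nth [simp]: "v4 a b c d $ 1 = a" "v4 a b c d $ 2 = b" "v4 a b c d $ 3 = c" "v4 a b c d $ 4 = d"
  by (simp_all add: v4_def)

(* dot z (cross4 a b c) is the determinant with rows a, b, c, z, up to sign. *)
definition cross4 :: "complex^4 \<Rightarrow> complex^4 \<Rightarrow> complex^4 \<Rightarrow> complex^4" where
  "cross4 a b c = v4
    (- det3 (a$2) (a$3) (a$4) (b$2) (b$3) (b$4) (c$2) (c$3) (c$4))
    (det3 (a$1) (a$3) (a$4) (b$1) (b$3) (b$4) (c$1) (c$3) (c$4))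
    (- det3 (a$1) (a$2) (a$4) (b$1) (b$2) (b$4) (c$1) (c$2) (c$4))
    (det3 (a$1) (a$2) (a$3) (b$1) (b$2) (b$3) (c$1) (c$2) (c$3))"

lemma dot_cross4_self [simp]:
  "dot a (cross4 a b c) = 0" "dot b (cross4 a b c) = 0" "dot c (cross4 a b c) = 0"
  by (simp_all add: dot4 cross4_def det3_def algebra_simps)

lemma cross4_scale [simp]:
  "cross4 (s *s a) b c = s *s cross4 a b c"
  "cross4 a (s *s b) c = s *s cross4 a b c"
  "cross4 a b (s *s c) = s *s cross4 a b c"
  unfolding vec_eq_iff forall_4 by (simp_all add: cross4_def det3_def algebra_simps)

lemma cross4_zero [simp]: "cross4 0 b c = 0" "cross4 a 0 c = 0"
  using cross4_scale(1)[of 0 a b c] cross4_scale(2)[of a 0 b c] by simp_all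

lemma cross4_cramer:
  "dot z (cross4 a b c) *s n = (- dot a n) *s cross4 b c z + dot b n *s cross4 a c z
     - dot c n *s cross4 a b z + dot z n *s cross4 a b c"
  unfolding vec_eq_iff forall_4 by (simp add: dot4 cross4_def det3_def algebra_simps)

lemma det4_eq_0_if_common_orthogonal:
  assumes "dot a n = 0" "dot b n = 0" "dot c n = 0" "dot z n = 0" "n \<noteq> 0"
  shows "dot z (cross4 a b c) = 0"
  using cross4_cramer[of z a b c n] assms by simp

lemma orthogonal_parallel_cross4:
  assumes "dot a x = 0" "dot b x = 0" "dot c x = 0" "cross4 a b c \<noteq> 0"
  shows "\<exists>s. x = s *s cross4 a b c"
proof -
  define z where "z = cnj_vec (cross4 a b c)"
  have "dot z (cross4 a b c) *s x = dot z x *s cross4 a b c"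
    using cross4_cramer[of z a b c x] assms(1-3) by (simp add: dot_commute[of _ x])
  then have "x = (dot z x / dot z (cross4 a b c)) *s cross4 a b c"
    using dot_cnj_vec_self_nonzero[OF assms(4)] by (simp add: z_def vec_eq_iff field_simps)
  then show ?thesis ..
qed

section \<open>Polynomial maps\<close>

definition pvec :: "('a \<Rightarrow> complex) set \<Rightarrow> ('a \<Rightarrow> complex^'n) \<Rightarrow> bool" where
  "pvec V F \<longleftrightarrow> (\<forall>r. (\<lambda>x. F x $ r) \<in> polys V)"

definition pmat :: "('a \<Rightarrow> complex) set \<Rightarrow> ('a \<Rightarrow> complex^'n^'m) \<Rightarrow> bool" where
  "pmat V M \<longleftrightarrow> (\<forall>r c. (\<lambda>x. M x $ r $ c) \<in> polys V)"

lemma pvec_nth: "pvec V F \<Longrightarrow> (\<lambda>x. F x $ r) \<in> polys V"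
  by (simp add: pvec_def)

lemma pvec_const: "pvec V (\<lambda>x. c)"
  by (simp add: pvec_def polys.const)

lemma pmat_const: "pmat V (\<lambda>x. c)"
  by (simp add: pmat_def polys.const)

lemma polys_dot: "pvec V F \<Longrightarrow> pvec V G \<Longrightarrow> (\<lambda>x. dot (F x) (G x)) \<in> polys V"
  unfolding dot_def by (intro polys_sum polys.mult) (auto simp: pvec_def)

lemma pvec_add: "pvec V F \<Longrightarrow> pvec V G \<Longrightarrow> pvec V (\<lambda>x. F x + G x)"
  unfolding pvec_def by (auto intro: polys.add)

lemma pvec_scale: "f \<in> polys V \<Longrightarrow> pvec V G \<Longrightarrow> pvec V (\<lambda>x. f x *s G x)"
  unfolding pvec_def by (auto intro: polys.mult)

lemma pvec_matrix_vector: "pmat V M \<Longrightarrow> pvec V F \<Longrightarrow> pvec V (\<lambda>x. M x *v F x)"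
  unfolding pvec_def pmat_def matrix_vector_mult_def by (auto intro!: polys_sum polys.mult)

lemma pvec_vector_matrix: "pvec V F \<Longrightarrow> pmat V M \<Longrightarrow> pvec V (\<lambda>x. F x v* M x)"
  unfolding pvec_def pmat_def vector_matrix_mult_def by (auto intro!: polys_sum polys.mult)

lemma pvec_ccross:
  assumes "pvec V F" "pvec V G" shows "pvec V (\<lambda>x. ccross (F x) (G x))"
  unfolding pvec_def
proof
  fix r :: 3
  have "(\<lambda>x. F x $ s) \<in> polys V" "(\<lambda>x. G x $ s) \<in> polys V" for s
    using assms by (auto simp: pvec_def)
  then show "(\<lambda>x. ccross (F x) (G x) $ r) \<in> polys V"
    using exhaust_3[of r] by (auto intro!: polys_minus polys.mult)
qed

lemma pvec_cross4:
  assumes "pvec V F" "pvec V G" "pvec V H" shows "pvec V (\<lambda>x. cross4 (F x) (G x) (H x))"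
  unfolding pvec_def
proof
  fix r :: 4
  have "(\<lambda>x. F x $ s) \<in> polys V" "(\<lambda>x. G x $ s) \<in> polys V" "(\<lambda>x. H x $ s) \<in> polys V" for s
    using assms by (auto simp: pvec_def)
  then show "(\<lambda>x. cross4 (F x) (G x) (H x) $ r) \<in> polys V"
    using exhaust_4[of r]
    by (auto simp: cross4_def det3_def intro!: polys_uminus polys_minus polys.add polys.mult)
qed

lemmas polymap_intros = pvec_nth polys_dot pvec_const pmat_const pvec_add pvec_scale
  pvec_matrix_vector pvec_vector_matrix pvec_ccross pvec_cross4

lemma generically_vec_nonzero:
  assumes "pvec V F" "F a \<noteq> 0"
  shows "generically V (\<lambda>x. F x \<noteq> 0)"
proof -
  obtain r where "F a $ r \<noteq> 0" using assms(2) by (auto simp: vec_eq_iff)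
  with pvec_nth[OF assms(1)] have "generically V (\<lambda>x. F x $ r \<noteq> 0)"
    by (rule generically_nonzero)
  then show ?thesis by (rule generically_mono) auto
qed

lemma cam_coords_pmat: "k < m \<Longrightarrow> pmat (cam_coords m) (\<lambda>Cs. Cs k)"
  unfolding pmat_def cam_coords_def by (auto intro!: polys.var)

lemma pt_coords_pvec: "k < m \<Longrightarrow> pvec (pt_coords m) (\<lambda>x. x k)"
  unfolding pvec_def pt_coords_def by (auto intro!: polys.var)

lemma lin_coords_pvec: "i < m \<Longrightarrow> r < d i \<Longrightarrow> pvec (lin_coords m d) (\<lambda>A. A i r)"
  unfolding pvec_def lin_coords_def by (auto intro!: polys.var)

definition vec_coords :: "(complex^'n \<Rightarrow> complex) set" where
  "vec_coords = range (\<lambda>s w. w $ s)"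

lemma vec_coords_pvec: "pvec vec_coords (\<lambda>w. w)"
  unfolding pvec_def vec_coords_def by (auto intro!: polys.var)

lemma affine_line_connected_cam_coords: "affine_line_connected (cam_coords m)"
  unfolding affine_line_connected_def
proof (intro allI)
  fix a b :: "nat \<Rightarrow> camera"
  show "\<exists>l. l 0 = a \<and> l 1 = b \<and> (\<forall>v\<in>cam_coords m. \<exists>c0 c1. \<forall>t. v (l t) = c0 + c1 * t)"
    by (rule exI[of _ "\<lambda>t k. \<chi> r c. a k $ r $ c + t * (b k $ r $ c - a k $ r $ c)"])
      (force simp: vec_eq_iff cam_coords_def mult.commute)
qed

lemma affine_line_connected_lin_coords: "affine_line_connected (lin_coords m d)"
  unfolding affine_line_connected_def
proof (intro allI)
  fix a b :: "nat \<Rightarrow> nat \<Rightarrow> complex^3"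
  show "\<exists>l. l 0 = a \<and> l 1 = b \<and> (\<forall>v\<in>lin_coords m d. \<exists>c0 c1. \<forall>t. v (l t) = c0 + c1 * t)"
    by (rule exI[of _ "\<lambda>t k r. \<chi> c. a k r $ c + t * (b k r $ c - a k r $ c)"])
      (force simp: vec_eq_iff lin_coords_def mult.commute)
qed

lemma affine_line_connected_vec_coords: "affine_line_connected vec_coords"
  unfolding affine_line_connected_def
proof (intro allI)
  fix a b :: "complex^'n"
  show "\<exists>l. l 0 = a \<and> l 1 = b \<and> (\<forall>v\<in>vec_coords. \<exists>c0 c1. \<forall>t. v (l t) = c0 + c1 * t)"
    by (rule exI[of _ "\<lambda>t. \<chi> c. a $ c + t * (b $ c - a $ c)"])
      (force simp: vec_eq_iff vec_coords_def mult.commute)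
qed

section \<open>Multihomogeneous vanishing and linear sections\<close>

definition deg_at :: "nat \<Rightarrow> nat \<Rightarrow> nat" where
  "deg_at i l = (if l = i then 1 else 0)"

lemma prod_power_deg_at: "i < m \<Longrightarrow> (\<Prod>l<m. (c l :: complex) ^ deg_at i l) = c i"
  by (simp add: deg_at_def if_distrib[of "power _"] prod.delta cong: if_cong)

lemma multihom_dot: "i < m \<Longrightarrow> multihom m (deg_at i) (\<lambda>x. dot (x i) n)"
  unfolding multihom_def
  by (auto intro!: polymap_intros pt_coords_pvec simp: prod_power_deg_at)

lemma zclosure_superset: "S \<subseteq> pts_m m \<Longrightarrow> S \<subseteq> zclosure m S"
  unfolding zclosure_def by auto

lemma zclosure_subset_pts: "zclosure m S \<subseteq> pts_m m"
  unfolding zclosure_def by auto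

lemma zclosure_vanishing:
  "x \<in> zclosure m S \<Longrightarrow> multihom m e f \<Longrightarrow> (\<And>y. y \<in> S \<Longrightarrow> f y = 0) \<Longrightarrow> f x = 0"
  unfolding zclosure_def by auto

lemma multideg_is_generically:
  "multideg_is m V d n \<longleftrightarrow>
     generically (lin_coords m d) (\<lambda>A. finite (section_pts m d A V) \<and> card (section_pts m d A V) = n)"
  unfolding multideg_is_def generically_def ..

lemma section_pts_eq:
  "section_pts m d A V = (\<lambda>x i. pt (x i)) ` {x \<in> V. \<forall>i<m. \<forall>r<d i. dot (A i r) (x i) = 0}"
  unfolding section_pts_def dot_def ..

lemma pt_scale: "c \<noteq> 0 \<Longrightarrow> pt (c *s v) = pt v"
  unfolding pt_def
proof (intro set_eqI iffI)
  fix x assume "x \<in> range (\<lambda>c'. c' *s (c *s v))"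
  then show "x \<in> range (\<lambda>c. c *s v)" by (auto simp: vector_smult_assoc)
next
  fix x assume c: "c \<noteq> 0" and "x \<in> range (\<lambda>c. c *s v)"
  then obtain c' where "x = c' *s v" by auto
  then have "x = (c' / c) *s (c *s v)" using c by (simp add: vector_smult_assoc)
  then show "x \<in> range (\<lambda>c'. c' *s (c *s v))" by (rule range_eqI)
qed

lemma card_points_eq_1:
  assumes "V \<subseteq> pts_m m" "y \<in> V" "P y"
    and "\<And>x k. x \<in> V \<Longrightarrow> P x \<Longrightarrow> k < m \<Longrightarrow> \<exists>c. x k = c *s y k"
  shows "finite ((\<lambda>x i. pt (x i)) ` {x \<in> V. P x}) \<and> card ((\<lambda>x i. pt (x i)) ` {x \<in> V. P x}) = 1"
proof -
  have "(\<lambda>i. pt (x i)) = (\<lambda>i. pt (y i))" if xV: "x \<in> V" and Px: "P x" for x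
  proof
    fix k
    have x: "x \<in> pts_m m" and y: "y \<in> pts_m m" using assms(1,2) xV by auto
    show "pt (x k) = pt (y k)"
    proof (cases "k < m")
      case True
      then obtain c where c: "x k = c *s y k" using assms(4) xV Px by blast
      with x True have "c \<noteq> 0" by (auto simp: pts_m_def)
      with c show ?thesis by (simp add: pt_scale)
    next
      case False
      with x y show ?thesis by (simp add: pts_m_def)
    qed
  qed
  then have "(\<lambda>x i. pt (x i)) ` {x \<in> V. P x} = {\<lambda>i. pt (y i)}"
    using assms(2,3) by blast
  then show ?thesis by simp
qed

section \<open>The multiview variety of a line\<close>

lemma cindep_if_ccross_nonzero: "ccross p q \<noteq> 0 \<Longrightarrow> cindep p q"
  unfolding cindep_def
proof (intro allI impI)
  fix a b assume pq: "ccross p q \<noteq> 0" and ab: "a *s p + b *s q = 0"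
  have "a *s ccross p q = 0" using arg_cong[OF ab, of "\<lambda>w. ccross w q"] by (simp add: ccross_add)
  moreover have "b *s ccross p q = 0" using arg_cong[OF ab, of "ccross p"] by (simp add: ccross_add)
  ultimately show "a = 0 \<and> b = 0" using pq by (simp add: vec_eq_iff) blast
qed

lemma multiview_line_memberI:
  assumes "Y = a *s u + b *s v" "Y \<noteq> 0" "\<forall>k<m. C k *v Y \<noteq> 0"
  shows "(\<lambda>k. if k < m then C k *v Y else 0) \<in> multiview_line m C u v"
  unfolding multiview_line_def using assms
  by (intro subsetD[OF zclosure_superset]) (auto simp: pts_m_def)

lemma multiview_line_subset_pts: "multiview_line m C u v \<subseteq> pts_m m"
  unfolding multiview_line_def by (rule zclosure_subset_pts)

lemma multiview_line_vanishing:
  assumes "x \<in> multiview_line m C u v" "multihom m e f"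
    and "\<And>a b. f (\<lambda>k. if k < m then C k *v (a *s u + b *s v) else 0) = 0"
  shows "f x = 0"
  using assms unfolding multiview_line_def by (auto elim!: zclosure_vanishing)

definition line_lift :: "camera \<Rightarrow> complex^4 \<Rightarrow> complex^4 \<Rightarrow> complex^3 \<Rightarrow> complex^3 \<Rightarrow> complex^4" where
  "line_lift C u v z w = dot z (ccross w (C *v v)) *s u + dot z (ccross (C *v u) w) *s v"

lemma line_lift_scale: "line_lift C u v z (c *s w) = c *s line_lift C u v z w"
  by (simp add: line_lift_def vector_add_ldistrib vector_smult_assoc)

lemma line_lift_image:
  "line_lift C u v z (C *v (a *s u + b *s v)) = dot z (ccross (C *v u) (C *v v)) *s (a *s u + b *s v)"
  by (simp add: line_lift_def matrix_vector_right_distrib vector_scalar_commute ccross_add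
      vector_add_ldistrib vector_smult_assoc mult.commute)

lemma multiview_line_incident:
  assumes "x \<in> multiview_line m C u v" "i < m"
  shows "dot (x i) (ccross (C i *v u) (C i *v v)) = 0"
proof (rule multiview_line_vanishing[OF assms(1) multihom_dot[OF assms(2)]])
  fix a b
  show "dot (if i < m then C i *v (a *s u + b *s v) else 0) (ccross (C i *v u) (C i *v v)) = 0"
    using assms(2)
    by (simp add: matrix_vector_right_distrib matrix_vector_mult_diff_distrib vector_scalar_commute)
qed

lemma multiview_line_transfer:
  assumes "x \<in> multiview_line m C u v" "i < m" "k < m"
  shows "ccross (x k) (C k *v line_lift (C i) u v z (x i)) = 0"
proof -
  have "ccross (x k) (C k *v line_lift (C i) u v z (x i)) $ t = 0" for t
  proof (rule multiview_line_vanishing[OF assms(1)])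
    show "multihom m (\<lambda>l. deg_at i l + deg_at k l)
        (\<lambda>x. ccross (x k) (C k *v line_lift (C i) u v z (x i)) $ t)"
    proof (unfold multihom_def, intro conjI allI impI)
      show "(\<lambda>x. ccross (x k) (C k *v line_lift (C i) u v z (x i)) $ t) \<in> polys (pt_coords m)"
        unfolding line_lift_def by (intro polymap_intros pt_coords_pvec assms(2,3))
    qed (simp add: line_lift_scale vector_scalar_commute power_add prod.distrib
        prod_power_deg_at assms(2,3))
  next
    fix a b
    show "ccross ((\<lambda>k. if k < m then C k *v (a *s u + b *s v) else 0) k)
        (C k *v line_lift (C i) u v z ((\<lambda>k. if k < m then C k *v (a *s u + b *s v) else 0) i)) $ t = 0"
      using assms(2,3) by (simp only: if_True line_lift_image vector_scalar_commute ccross_scale) simp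
  qed
  then show ?thesis by (simp add: vec_eq_iff)
qed

lemma multiview_line_image_of_point:
  assumes xV: "x \<in> multiview_line m C u v" and i: "i < m" and k: "k < m"
    and n: "ccross (C i *v u) (C i *v v) \<noteq> 0"
    and Y: "Y = a *s u + b *s v" and xi: "x i = C i *v Y"
  shows "ccross (x k) (C k *v Y) = 0"
proof -
  define n where "n = ccross (C i *v u) (C i *v v)"
  have "line_lift (C i) u v (cnj_vec n) (x i) = dot (cnj_vec n) n *s Y"
    unfolding xi Y line_lift_image n_def ..
  then have "dot (cnj_vec n) n *s ccross (x k) (C k *v Y) = 0"
    using multiview_line_transfer[OF xV i k, of "cnj_vec n"] by (simp add: vector_scalar_commute)
  moreover have "dot (cnj_vec n) n \<noteq> 0" using n by (intro dot_cnj_vec_self_nonzero) (simp add: n_def)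
  ultimately show ?thesis by (simp add: vec_eq_iff)
qed

lemma multiview_line_section:
  assumes i: "i < m" and proper: "\<forall>k<m. ccross (C k *v u) (C k *v v) \<noteq> 0"
    and a: "ccross a (ccross (C i *v u) (C i *v v)) \<noteq> 0"
  shows "finite ((\<lambda>x i. pt (x i)) ` {x \<in> multiview_line m C u v. dot a (x i) = 0}) \<and>
    card ((\<lambda>x i. pt (x i)) ` {x \<in> multiview_line m C u v. dot a (x i) = 0}) = 1"
proof -
  define n where "n = ccross (C i *v u) (C i *v v)"
  define Y where "Y = dot a (C i *v v) *s u + (- dot a (C i *v u)) *s v"
  define y where "y = (\<lambda>k. if k < m then C k *v Y else 0)"
  have CiY: "C i *v Y = ccross a n"
    by (simp add: Y_def n_def ccross_ccross_right matrix_vector_right_distrib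
        matrix_vector_mult_diff_distrib vector_scalar_commute)
  have CkY: "C k *v Y \<noteq> 0" if "k < m" for k
  proof
    assume "C k *v Y = 0"
    then have "dot a (C i *v v) *s (C k *v u) + (- dot a (C i *v u)) *s (C k *v v) = 0"
      by (simp add: Y_def matrix_vector_mult_diff_distrib vector_scalar_commute)
    then have "dot a (C i *v v) = 0 \<and> - dot a (C i *v u) = 0"
      using cindep_if_ccross_nonzero[of "C k *v u" "C k *v v"] proper that
      unfolding cindep_def by blast
    then show False using CiY a by (simp add: Y_def n_def)
  qed
  have yV: "y \<in> multiview_line m C u v"
    unfolding y_def by (rule multiview_line_memberI[OF Y_def]) (use CkY CiY a in \<open>auto simp: n_def\<close>)
  have ya: "dot a (y i) = 0" using i by (simp add: y_def CiY n_def)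
  have "\<exists>c. x k = c *s y k"
    if xV: "x \<in> multiview_line m C u v" and xa: "dot a (x i) = 0" and k: "k < m" for x k
  proof -
    \<comment> \<open>the hyperplane a and the image line C i L meet in the single point C i Y\<close>
    obtain s where s: "x i = s *s ccross a n"
      using orthogonal_parallel_ccross[of "x i" a n] xa multiview_line_incident[OF xV i] a
      by (auto simp: dot_commute n_def)
    have "x i \<noteq> 0" using subsetD[OF multiview_line_subset_pts xV] i by (simp add: pts_m_def)
    then have "s \<noteq> 0" using s by auto
    have sY: "s *s Y = (s * dot a (C i *v v)) *s u + (s * - dot a (C i *v u)) *s v"
      by (simp add: Y_def vector_add_ldistrib vector_smult_assoc)
    have "x i = C i *v (s *s Y)" using s CiY by (simp add: vector_scalar_commute)
    then have "ccross (x k) (C k *v (s *s Y)) = 0"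
      using proper i by (intro multiview_line_image_of_point[OF xV i k _ sY]) auto
    then have "ccross (x k) (y k) = 0" using \<open>s \<noteq> 0\<close> k
      by (simp add: y_def vector_scalar_commute vec_eq_iff)
    then show ?thesis using CkY k by (intro ccross_eq_0_parallel) (auto simp: y_def)
  qed
  then show ?thesis
    by (rule card_points_eq_1[OF multiview_line_subset_pts yV, where P = "\<lambda>x. dot a (x i) = 0", OF ya])
qed

lemma multideg_multiview_line:
  assumes "i < m" "\<forall>k<m. ccross (C k *v u) (C k *v v) \<noteq> 0"
  shows "multideg_is m (multiview_line m C u v) (\<lambda>k. if k = i then 1 else 0) 1"
proof -
  define n where "n = ccross (C i *v u) (C i *v v)"
  obtain a where "ccross a n \<noteq> 0" using assms ex_ccross_nonzero by (auto simp: n_def)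
  then have "generically (lin_coords m (\<lambda>k. if k = i then 1 else 0)) (\<lambda>A. ccross (A i 0) n \<noteq> 0)"
    using assms(1)
    by (intro generically_vec_nonzero[where a = "\<lambda>_ _. a"] polymap_intros lin_coords_pvec) auto
  then show ?thesis
    unfolding multideg_is_generically section_pts_eq
    by (rule generically_mono) (use multiview_line_section[OF assms] assms(1) in \<open>simp add: n_def\<close>)
qed

section \<open>The variety of lines through a point\<close>

lemma cindep_if_cindep_image: "cindep (C *v X) (C *v w) \<Longrightarrow> cindep X w"
  unfolding cindep_def
proof (intro allI impI)
  fix a b
  assume indep: "\<forall>a b. a *s (C *v X) + b *s (C *v w) = 0 \<longrightarrow> a = 0 \<and> b = 0"
    and "a *s X + b *s w = 0"
  then have "C *v (a *s X + b *s w) = 0" by simp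
  then have "a *s (C *v X) + b *s (C *v w) = 0"
    by (simp only: matrix_vector_right_distrib vector_scalar_commute)
  with indep show "a = 0 \<and> b = 0" by blast
qed

lemma cindep_if_cam_line_nonzero: "cam_line C X w \<noteq> 0 \<Longrightarrow> cindep X w"
  unfolding cam_line_def by (rule cindep_if_cindep_image, rule cindep_if_ccross_nonzero)

lemma LX_X_subset_pts: "LX_X m C X \<subseteq> pts_m m"
  unfolding LX_X_def by (rule zclosure_subset_pts)

lemma LX_X_memberI:
  assumes "cindep X w" "\<forall>k<m. cam_line (C k) X w \<noteq> 0"
  shows "(\<lambda>k. if k < m then cam_line (C k) X w else 0) \<in> LX_X m C X"
  unfolding LX_X_def using assms
  by (intro subsetD[OF zclosure_superset]) (auto simp: pts_m_def)

lemma LX_X_vanishing: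
  assumes "x \<in> LX_X m C X" "multihom m e f"
    and "\<And>w. cindep X w \<Longrightarrow> f (\<lambda>k. if k < m then cam_line (C k) X w else 0) = 0"
  shows "f x = 0"
  using assms unfolding LX_X_def by (auto elim!: zclosure_vanishing)

lemma LX_X_incident:
  assumes "x \<in> LX_X m C X" "l < m"
  shows "dot (x l) (C l *v X) = 0"
  using assms(2) by (intro LX_X_vanishing[OF assms(1) multihom_dot]) (simp_all add: cam_line_def)

lemma multideg_LX_X_double:
  assumes i: "i < m" and visible: "C i *v X \<noteq> 0"
  shows "multideg_is m (LX_X m C X) (\<lambda>k. if k = i then 2 else 0) 0"
proof -
  define P where "P = C i *v X"
  obtain a where a: "ccross P a \<noteq> 0"
    using ex_ccross_nonzero visible ccross_commute by (metis P_def neg_equal_0_iff_equal)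
  have "dot P (ccross a (cnj_vec (ccross P a))) \<noteq> 0"
    using dot_cnj_vec_self_nonzero[OF a] by (metis dot_ccross_assoc dot_commute)
  then have generic: "generically (lin_coords m (\<lambda>k. if k = i then 2 else 0))
      (\<lambda>A. dot P (ccross (A i 0) (A i 1)) \<noteq> 0)"
    using i by (intro generically_nonzero[where a = "\<lambda>_ r. if r = 0 then a else cnj_vec (ccross P a)"]
        polymap_intros lin_coords_pvec) auto
  have no_point: "{x \<in> LX_X m C X.
      \<forall>l<m. \<forall>r<(if l = i then 2 else 0::nat). dot (A l r) (x l) = 0} = {}"
    if "dot P (ccross (A i 0) (A i 1)) \<noteq> 0" for A
  proof (intro equals0I, elim CollectE conjE)
    fix x assume x: "x \<in> LX_X m C X"
      and "\<forall>l<m. \<forall>r<(if l = i then 2 else 0::nat). dot (A l r) (x l) = 0"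
    then have "dot (A i 0) (x i) = 0" "dot (A i 1) (x i) = 0" using i by auto
    then have "x i = 0"
      using orthogonal_triple_eq_0 that LX_X_incident[OF x i] by (metis P_def dot_commute)
    then show False using subsetD[OF LX_X_subset_pts x] i by (simp add: pts_m_def)
  qed
  show ?thesis
    unfolding multideg_is_generically section_pts_eq
    by (rule generically_mono[OF generic]) (simp add: no_point)
qed

(* The point where the plane g meets the planes back-projected through Ci and Cj from the
   image lines li and lj. *)
definition backproj_meet :: "camera \<Rightarrow> camera \<Rightarrow> complex^4 \<Rightarrow> complex^3 \<Rightarrow> complex^3 \<Rightarrow> complex^4" where
  "backproj_meet Ci Cj g li lj = cross4 (li v* Ci) (lj v* Cj) g"

lemma backproj_meet_scale:
  "backproj_meet Ci Cj g (s *s li) (t *s lj) = (s * t) *s backproj_meet Ci Cj g li lj"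
  by (simp add: backproj_meet_def scalar_vector_matrix_assoc vector_smult_assoc mult.commute)

lemma cam_line_scale: "cam_line C X (s *s w) = s *s cam_line C X w"
  by (simp add: cam_line_def vector_scalar_commute)

lemma LX_X_trilinear:
  assumes "x \<in> LX_X m C X" "i < m" "j < m" "k < m" "dot g X \<noteq> 0"
  shows "dot (x k v* C k) (backproj_meet (C i) (C j) g (x i) (x j)) = 0"
proof (rule LX_X_vanishing[OF assms(1)])
  show "multihom m (\<lambda>l. deg_at i l + deg_at j l + deg_at k l)
      (\<lambda>x. dot (x k v* C k) (backproj_meet (C i) (C j) g (x i) (x j)))"
  proof (unfold multihom_def, intro conjI allI impI)
    show "(\<lambda>x. dot (x k v* C k) (backproj_meet (C i) (C j) g (x i) (x j))) \<in> polys (pt_coords m)"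
      unfolding backproj_meet_def by (intro polymap_intros pt_coords_pvec assms(2-4))
  qed (simp add: backproj_meet_scale scalar_vector_matrix_assoc power_add prod.distrib
      prod_power_deg_at assms(2-4) mult_ac)
next
  fix w assume w: "cindep X w"
  \<comment> \<open>all back-projected planes contain the line through X and w, which meets g in n\<close>
  define n where "n = dot g w *s X + (- dot g X) *s w"
  have "n \<noteq> 0"
  proof
    assume "n = 0"
    then have "- dot g X = 0" using w unfolding cindep_def n_def by blast
    with assms(5) show False by simp
  qed
  moreover have "dot (cam_line (C l) X w v* C l) n = 0" for l
    by (simp add: n_def dot_vector_matrix cam_line_def
        matrix_vector_right_distrib vector_scalar_commute)
  moreover have "dot g n = 0" by (simp add: n_def)
  ultimately show "dot ((\<lambda>k. if k < m then cam_line (C k) X w else 0) k v* C k)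
      (backproj_meet (C i) (C j) g ((\<lambda>k. if k < m then cam_line (C k) X w else 0) i)
        ((\<lambda>k. if k < m then cam_line (C k) X w else 0) j)) = 0"
    using assms(2-4) by (simp add: backproj_meet_def det4_eq_0_if_common_orthogonal[where n = n])
qed

lemma cam_line_backproj_meet_nonzero:
  assumes "dot g X \<noteq> 0" "cam_line Ck X w \<noteq> 0"
    and "backproj_meet Ci Cj g (cam_line Ci X w) (cam_line Cj X w) \<noteq> 0"
  shows "cam_line Ck X (backproj_meet Ci Cj g (cam_line Ci X w) (cam_line Cj X w)) \<noteq> 0"
proof
  assume meet: "cam_line Ck X (backproj_meet Ci Cj g (cam_line Ci X w) (cam_line Cj X w)) = 0"
  \<comment> \<open>the meet point is the point of the line through X and w on the plane g\<close>
  define v where "v = dot g w *s X + (- dot g X) *s w"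
  have "dot (cam_line Ci X w v* Ci) v = 0" "dot (cam_line Cj X w v* Cj) v = 0" "dot g v = 0"
    by (simp_all add: v_def dot_vector_matrix cam_line_def
        matrix_vector_right_distrib vector_scalar_commute)
  then obtain s where "v = s *s backproj_meet Ci Cj g (cam_line Ci X w) (cam_line Cj X w)"
    using orthogonal_parallel_cross4 assms(3) unfolding backproj_meet_def by blast
  then have "cam_line Ck X v = 0" using meet by (simp add: cam_line_scale)
  moreover have "cam_line Ck X v = (- dot g X) *s cam_line Ck X w"
    by (simp add: v_def cam_line_def matrix_vector_mult_diff_distrib vector_scalar_commute ccross_diff)
  ultimately show False using assms(1,2) by simp
qed

lemma ex_point_cam_line_backproj_meet_nonzero:
  assumes "is_camera Ck" "Ck *v X \<noteq> 0"
    and "backproj_meet Ci Cj g (cam_line Ci X w) (cam_line Cj X w) \<noteq> 0"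
  shows "\<exists>w. cam_line Ck X w \<noteq> 0 \<and> backproj_meet Ci Cj g (cam_line Ci X w) (cam_line Cj X w) \<noteq> 0"
proof -
  obtain a where "ccross (Ck *v X) a \<noteq> 0"
    using ex_ccross_nonzero[OF assms(2)] ccross_commute by (metis neg_equal_0_iff_equal)
  moreover obtain w' where "Ck *v w' = a" using assms(1) unfolding is_camera_def by blast
  ultimately have "generically vec_coords (\<lambda>w. cam_line Ck X w \<noteq> 0)"
    unfolding cam_line_def
    by (intro generically_vec_nonzero[where a = w'] polymap_intros vec_coords_pvec) auto
  moreover have "generically vec_coords
      (\<lambda>w. backproj_meet Ci Cj g (cam_line Ci X w) (cam_line Cj X w) \<noteq> 0)"
    unfolding backproj_meet_def cam_line_def using assms(3)
    by (intro generically_vec_nonzero[where a = w] polymap_intros vec_coords_pvec)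
      (simp add: backproj_meet_def cam_line_def)
  ultimately show ?thesis
    using generically_conj[OF affine_line_connected_vec_coords] generically_ex by blast
qed

lemma ex_lines_cam_line_backproj_meet_nonzero:
  assumes "is_camera Ck" "Ck *v X \<noteq> 0" "Ci *v X \<noteq> 0" "Cj *v X \<noteq> 0" "dot g X \<noteq> 0"
    and "backproj_meet Ci Cj g (cam_line Ci X w) (cam_line Cj X w) \<noteq> 0"
  shows "\<exists>a b. cam_line Ck X (backproj_meet Ci Cj g (ccross a (Ci *v X)) (ccross b (Cj *v X))) \<noteq> 0"
proof -
  obtain w where w: "cam_line Ck X w \<noteq> 0"
    and meet: "backproj_meet Ci Cj g (cam_line Ci X w) (cam_line Cj X w) \<noteq> 0"
    using ex_point_cam_line_backproj_meet_nonzero[OF assms(1,2,6)] by blast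
  define ci where "ci = dot (cnj_vec (Ci *v X)) (Ci *v X)"
  define cj where "cj = dot (cnj_vec (Cj *v X)) (Cj *v X)"
  have "backproj_meet Ci Cj g (ccross (ccross (cnj_vec (Ci *v X)) (cam_line Ci X w)) (Ci *v X))
      (ccross (ccross (cnj_vec (Cj *v X)) (cam_line Cj X w)) (Cj *v X)) =
    (ci * cj) *s backproj_meet Ci Cj g (cam_line Ci X w) (cam_line Cj X w)"
    by (simp add: ccross_ccross_cnj_vec cam_line_def backproj_meet_scale ci_def cj_def)
  moreover have "ci * cj \<noteq> 0" using assms(3,4) by (simp add: ci_def cj_def dot_cnj_vec_self_nonzero)
  ultimately show ?thesis
    using cam_line_backproj_meet_nonzero[OF assms(5) w meet]
    by (metis cam_line_scale mult_eq_0_iff vector_mul_eq_0)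
qed

lemma LX_X_section_pair:
  assumes i: "i < m" and j: "j < m" and gX: "dot g X \<noteq> 0"
    and nonzero: "\<forall>k<m. cam_line (C k) X
      (backproj_meet (C i) (C j) g (ccross a (C i *v X)) (ccross b (C j *v X))) \<noteq> 0"
  shows "finite ((\<lambda>x i. pt (x i)) ` {x \<in> LX_X m C X. dot a (x i) = 0 \<and> dot b (x j) = 0}) \<and>
    card ((\<lambda>x i. pt (x i)) ` {x \<in> LX_X m C X. dot a (x i) = 0 \<and> dot b (x j) = 0}) = 1"
proof -
  define w where "w = backproj_meet (C i) (C j) g (ccross a (C i *v X)) (ccross b (C j *v X))"
  define y where "y = (\<lambda>k. if k < m then cam_line (C k) X w else 0)"
  have nonzero': "\<forall>k<m. cam_line (C k) X w \<noteq> 0" using nonzero by (simp add: w_def)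
  then have yV: "y \<in> LX_X m C X"
    unfolding y_def using i by (intro LX_X_memberI cindep_if_cam_line_nonzero) auto
  have ya: "dot a (y i) = 0" and yb: "dot b (y j) = 0"
    using i j by (simp_all add: y_def w_def cam_line_def dot_ccross_assoc
        dot_vector_matrix[symmetric] backproj_meet_def)
  have "\<exists>c. x k = c *s y k"
    if xV: "x \<in> LX_X m C X" and xab: "dot a (x i) = 0 \<and> dot b (x j) = 0" and k: "k < m" for x k
  proof -
    have xa: "dot a (x i) = 0" and xb: "dot b (x j) = 0" using xab by simp_all
    have a0: "ccross a (C i *v X) \<noteq> 0" and b0: "ccross b (C j *v X) \<noteq> 0"
      using nonzero' i by (auto simp: w_def backproj_meet_def cam_line_def)
    obtain si where si: "x i = si *s ccross a (C i *v X)"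
      using orthogonal_parallel_ccross[OF _ LX_X_incident[OF xV i] a0] xa by (auto simp: dot_commute)
    obtain sj where sj: "x j = sj *s ccross b (C j *v X)"
      using orthogonal_parallel_ccross[OF _ LX_X_incident[OF xV j] b0] xb by (auto simp: dot_commute)
    have "x i \<noteq> 0" "x j \<noteq> 0" using subsetD[OF LX_X_subset_pts xV] i j by (simp_all add: pts_m_def)
    then have "si * sj \<noteq> 0" using si sj by auto
    moreover have "(si * sj) * dot (x k) (C k *v w) = 0"
      using LX_X_trilinear[OF xV i j k gX]
      by (simp add: si sj backproj_meet_scale dot_vector_matrix w_def)
    ultimately have "dot (x k) (C k *v w) = 0" by simp
    then show ?thesis
      using orthogonal_parallel_ccross[OF LX_X_incident[OF xV k]] nonzero' k
      by (simp add: y_def cam_line_def)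
  qed
  then show ?thesis
    by (rule card_points_eq_1[OF LX_X_subset_pts yV,
          where P = "\<lambda>x. dot a (x i) = 0 \<and> dot b (x j) = 0", OF conjI[OF ya yb]])
qed

lemma multideg_LX_X_pair:
  assumes i: "i < m" and j: "j < m" and ij: "i \<noteq> j" and gX: "dot g X \<noteq> 0"
    and cameras: "\<forall>k<m. is_camera (C k)" and visible: "\<forall>k<m. C k *v X \<noteq> 0"
    and meet: "backproj_meet (C i) (C j) g (cam_line (C i) X w) (cam_line (C j) X w) \<noteq> 0"
  shows "multideg_is m (LX_X m C X) (\<lambda>k. if k = i \<or> k = j then 1 else 0) 1"
proof -
  define d where "d = (\<lambda>k. if k = i \<or> k = j then 1 else 0::nat)"
  have generic: "generically (lin_coords m d) (\<lambda>A. \<forall>k<m.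
      cam_line (C k) X (backproj_meet (C i) (C j) g (ccross (A i 0) (C i *v X))
        (ccross (A j 0) (C j *v X))) \<noteq> 0)"
  proof (rule generically_all_less[OF affine_line_connected_lin_coords])
    fix k assume k: "k < m"
    have "is_camera (C k)" "C k *v X \<noteq> 0" "C i *v X \<noteq> 0" "C j *v X \<noteq> 0"
      using cameras visible i j k by auto
    then obtain a b where "cam_line (C k) X (backproj_meet (C i) (C j) g (ccross a (C i *v X))
          (ccross b (C j *v X))) \<noteq> 0"
      using ex_lines_cam_line_backproj_meet_nonzero[OF _ _ _ _ gX meet] by blast
    then show "generically (lin_coords m d) (\<lambda>A.
        cam_line (C k) X (backproj_meet (C i) (C j) g (ccross (A i 0) (C i *v X))
          (ccross (A j 0) (C j *v X))) \<noteq> 0)"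
      unfolding cam_line_def backproj_meet_def using i j ij
      by (intro generically_vec_nonzero[where a = "\<lambda>l _. if l = i then a else b"]
          polymap_intros lin_coords_pvec)
        (auto simp: d_def)
  qed
  have sections: "{x \<in> LX_X m C X. \<forall>l<m. \<forall>r<d l. dot (A l r) (x l) = 0} =
      {x \<in> LX_X m C X. dot (A i 0) (x i) = 0 \<and> dot (A j 0) (x j) = 0}" for A
    using i j by (auto simp: d_def)
  show ?thesis
    unfolding multideg_is_generically section_pts_eq d_def[symmetric] sections
    by (rule generically_mono[OF generic]) (rule LX_X_section_pair[OF i j gX])
qed

section \<open>Cameras in general position\<close>

definition coord_camera :: "4 \<Rightarrow> 4 \<Rightarrow> 4 \<Rightarrow> camera" where
  "coord_camera r1 r2 r3 = (\<chi> r c. if c = (if r = 1 then r1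
      else if r = 2 then r2 else r3) then 1 else 0)"

lemma coord_camera_mult [simp]:
  "(coord_camera r1 r2 r3 *v x) $ 1 = x $ r1"
  "(coord_camera r1 r2 r3 *v x) $ 2 = x $ r2"
  "(coord_camera r1 r2 r3 *v x) $ 3 = x $ r3"
  by (simp_all add: coord_camera_def matrix_vector_mult_def if_distrib[of "\<lambda>c. c * _"] cong: if_cong)

lemma vector_coord_camera_nth [simp]:
  "(t v* coord_camera r1 r2 r3) $ c =
     (if c = r1 then t$1 else 0) + (if c = r2 then t$2 else 0) + (if c = r3 then t$3 else 0)"
  by (simp add: coord_camera_def vector_matrix_mult_def sum_3)

lemma ex_camera_ccross_nonzero:
  assumes indep: "cindep u v"
  shows "\<exists>C::camera. ccross (C *v u) (C *v v) \<noteq> 0"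
proof (rule ccontr)
  assume "\<not> ?thesis"
  then have "ccross (coord_camera a b a *v u) (coord_camera a b a *v v) $ 3 = 0" for a b
    by simp
  then have minors: "u$a * v$b = u$b * v$a" for a b
    by simp
  have "1 *s u + 0 *s v \<noteq> 0" using indep unfolding cindep_def by (metis one_neq_zero)
  then obtain a where a: "u $ a \<noteq> 0" by (auto simp: vec_eq_iff)
  have "v$a *s u + (- u$a) *s v = 0"
    using minors by (auto simp: vec_eq_iff algebra_simps)
  then have "- u$a = 0" using indep unfolding cindep_def by blast
  with a show False by simp
qed

lemma ex_camera_nonzero: "X \<noteq> 0 \<Longrightarrow> \<exists>C::camera. C *v X \<noteq> 0"
  by (metis coord_camera_mult(1) vec_eq_iff zero_index)

lemma ex_backproj_meet_nonzero:
  assumes "X \<noteq> 0"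
  shows "\<exists>g C1 C2 w. dot g X \<noteq> 0 \<and> backproj_meet C1 C2 g (cam_line C1 X w) (cam_line C2 X w) \<noteq> 0"
proof -
  obtain a where a: "X $ a \<noteq> 0" using assms by (auto simp: vec_eq_iff)
  have dot_axis: "dot (axis b 1) X = X $ b" for b
    by (simp add: dot_def axis_def if_distrib[of "\<lambda>c. c * _"] cong: if_cong)
  have "X$1 \<noteq> 0 \<Longrightarrow> backproj_meet (coord_camera 1 2 4) (coord_camera 1 2 3) (axis 1 1)
      (cam_line (coord_camera 1 2 4) X (axis 2 1)) (cam_line (coord_camera 1 2 3) X (axis 2 1)) $ 2 \<noteq> 0"
    "X$2 \<noteq> 0 \<Longrightarrow> backproj_meet (coord_camera 2 3 1) (coord_camera 2 3 4) (axis 2 1)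
      (cam_line (coord_camera 2 3 1) X (axis 3 1)) (cam_line (coord_camera 2 3 4) X (axis 3 1)) $ 3 \<noteq> 0"
    "X$3 \<noteq> 0 \<Longrightarrow> backproj_meet (coord_camera 3 4 2) (coord_camera 3 4 1) (axis 3 1)
      (cam_line (coord_camera 3 4 2) X (axis 4 1)) (cam_line (coord_camera 3 4 1) X (axis 4 1)) $ 4 \<noteq> 0"
    "X$4 \<noteq> 0 \<Longrightarrow> backproj_meet (coord_camera 4 1 3) (coord_camera 4 1 2) (axis 4 1)
      (cam_line (coord_camera 4 1 3) X (axis 1 1)) (cam_line (coord_camera 4 1 2) X (axis 1 1)) $ 1 \<noteq> 0"
    by (simp_all add: backproj_meet_def cam_line_def cross4_def det3_def axis_def)
  then show ?thesis
    using a exhaust_4[of a] dot_axis by (metis zero_index)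
qed

(* L and X avoid all centers, and for any two cameras the planes back-projected from the images
   of the line through X and w meet the plane g in a single point. *)
definition general_position ::
    "nat \<Rightarrow> complex^4 \<Rightarrow> complex^4 \<Rightarrow> complex^4 \<Rightarrow> complex^4 \<Rightarrow> complex^4 \<Rightarrow> (nat \<Rightarrow> camera) \<Rightarrow> bool" where
  "general_position m u v X g w Cs \<longleftrightarrow>
     (\<forall>k<m. ccross (Cs k *v u) (Cs k *v v) \<noteq> 0) \<and> (\<forall>k<m. Cs k *v X \<noteq> 0) \<and>
     (\<forall>i<m. \<forall>j<m. i \<noteq> j \<longrightarrow>
        backproj_meet (Cs i) (Cs j) g (cam_line (Cs i) X w) (cam_line (Cs j) X w) \<noteq> 0)"

lemma generically_cameras_line_proper:
  assumes "cindep u v"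
  shows "generically (cam_coords m) (\<lambda>Cs. \<forall>k<m. ccross (Cs k *v u) (Cs k *v v) \<noteq> 0)"
proof (rule generically_all_less[OF affine_line_connected_cam_coords])
  fix k assume "k < m"
  moreover obtain C :: camera where "ccross (C *v u) (C *v v) \<noteq> 0"
    using ex_camera_ccross_nonzero[OF assms] by blast
  ultimately show "generically (cam_coords m) (\<lambda>Cs. ccross (Cs k *v u) (Cs k *v v) \<noteq> 0)"
    by (intro generically_vec_nonzero[where a = "\<lambda>_. C"] polymap_intros cam_coords_pmat) auto
qed

lemma generically_cameras_point_visible:
  assumes "X \<noteq> 0"
  shows "generically (cam_coords m) (\<lambda>Cs. \<forall>k<m. Cs k *v X \<noteq> 0)"
proof (rule generically_all_less[OF affine_line_connected_cam_coords])
  fix k assume "k < m"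
  moreover obtain C :: camera where "C *v X \<noteq> 0" using ex_camera_nonzero[OF assms] by blast
  ultimately show "generically (cam_coords m) (\<lambda>Cs. Cs k *v X \<noteq> 0)"
    by (intro generically_vec_nonzero[where a = "\<lambda>_. C"] polymap_intros cam_coords_pmat) auto
qed

lemma generically_cameras_backproj_meet:
  assumes "backproj_meet C1 C2 g (cam_line C1 X w) (cam_line C2 X w) \<noteq> 0"
  shows "generically (cam_coords m) (\<lambda>Cs. \<forall>i<m. \<forall>j<m. i \<noteq> j \<longrightarrow>
    backproj_meet (Cs i) (Cs j) g (cam_line (Cs i) X w) (cam_line (Cs j) X w) \<noteq> 0)"
proof (intro generically_all_less generically_imp affine_line_connected_cam_coords)
  fix i j assume "i < m" "j < m" "i \<noteq> j"
  then show "generically (cam_coords m)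
      (\<lambda>Cs. backproj_meet (Cs i) (Cs j) g (cam_line (Cs i) X w) (cam_line (Cs j) X w) \<noteq> 0)"
    using assms unfolding backproj_meet_def cam_line_def
    by (intro generically_vec_nonzero[where a = "\<lambda>l. if l = i then C1 else C2"]
        polymap_intros cam_coords_pmat) auto
qed

lemma generically_general_position:
  assumes "cindep u v" "X \<noteq> 0" "backproj_meet C1 C2 g (cam_line C1 X w) (cam_line C2 X w) \<noteq> 0"
  shows "generically (cam_coords m) (general_position m u v X g w)"
  unfolding general_position_def
  by (intro generically_conj[OF affine_line_connected_cam_coords]
      generically_cameras_line_proper[OF assms(1)] generically_cameras_point_visible[OF assms(2)]
      generically_cameras_backproj_meet[OF assms(3)])

lemma multidegrees_general_position:
  assumes gX: "dot g X \<noteq> 0" and "general_position m u v X g w Cs" "camera_arrangement m Cs"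
  shows "(\<forall>i<m. multideg_is m (multiview_line m Cs u v) (\<lambda>k. if k = i then 1 else 0) 1) \<and>
    (\<forall>i<m. multideg_is m (LX_X m Cs X) (\<lambda>k. if k = i then 2 else 0) 0) \<and>
    (\<forall>i<m. \<forall>j<m. i \<noteq> j \<longrightarrow>
       multideg_is m (LX_X m Cs X) (\<lambda>k. if k = i \<or> k = j then 1 else 0) 1)"
proof (intro conjI allI impI)
  have proper: "\<forall>k<m. ccross (Cs k *v u) (Cs k *v v) \<noteq> 0" and visible: "\<forall>k<m. Cs k *v X \<noteq> 0"
    and meets: "\<forall>i<m. \<forall>j<m. i \<noteq> j \<longrightarrow>
      backproj_meet (Cs i) (Cs j) g (cam_line (Cs i) X w) (cam_line (Cs j) X w) \<noteq> 0"
    and cameras: "\<forall>k<m. is_camera (Cs k)"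
    using assms(2,3) by (simp_all add: general_position_def camera_arrangement_def)
  {
    fix i assume i: "i < m"
    show "multideg_is m (multiview_line m Cs u v) (\<lambda>k. if k = i then 1 else 0) 1"
      by (rule multideg_multiview_line[OF i proper])
    show "multideg_is m (LX_X m Cs X) (\<lambda>k. if k = i then 2 else 0) 0"
      using visible i by (intro multideg_LX_X_double) auto
  }
  fix i j assume "i < m" "j < m" "i \<noteq> j"
  then show "multideg_is m (LX_X m Cs X) (\<lambda>k. if k = i \<or> k = j then 1 else 0) 1"
    using meets by (intro multideg_LX_X_pair[OF _ _ _ gX cameras visible]) auto
qed

theorem proposition1p6:
  fixes m :: nat and X u v :: "complex^4"
  assumes "m \<ge> 2" and "X \<noteq> 0" and "cindep u v"
  shows "\<exists>p \<in> polys (cam_coords m). (\<exists>Cs. p Cs \<noteq> 0) \<and>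
     (\<forall>Cs. camera_arrangement m Cs \<and> p Cs \<noteq> 0 \<longrightarrow>
        (\<forall>i<m. multideg_is m (multiview_line m Cs u v) (\<lambda>k. if k = i then 1 else 0) 1) \<and>
        (\<forall>i<m. multideg_is m (LX_X m Cs X) (\<lambda>k. if k = i then 2 else 0) 0) \<and>
        (\<forall>i<m. \<forall>j<m. i \<noteq> j \<longrightarrow>
           multideg_is m (LX_X m Cs X) (\<lambda>k. if k = i \<or> k = j then 1 else 0) 1))"
proof -
  obtain g C1 C2 w where gX: "dot g X \<noteq> 0"
    and meet: "backproj_meet C1 C2 g (cam_line C1 X w) (cam_line C2 X w) \<noteq> 0"
    using ex_backproj_meet_nonzero[OF assms(2)] by blast
  show ?thesis
    using generically_general_position[OF assms(3,2) meet]
    by (rule generically_poly_witness) (rule multidegrees_general_position[OF gX])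
qed


end
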